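(* Let $x,y\in V(D^+)$ with $y\prec x$. If $d_s(I_s(x))<d_s(y)$, then $I_s(x)\prec y$. If $d_s(I_t(y))>d_s(x)$, then $x\prec I_t(y)$.
   Context: $G=(V,E,w)$ is a simple, connected, undirected graph with positive edge lengths, $s,t\in V$, and $d(\cdot,\cdot)$ is the shortest path distance in $G$; $d_s(v)=d(s,v)$, $d_t(v)=d(v,t)$. $D$ is the union of all shortest $st$-paths of $G$, and $D^+$ is the directed acyclic graph obtained from $D$ by orienting every edge toward $t$. For $x,y\in V(D^+)$, $x\prec y$ means $x$ is an ancestor of $y$ in $D^+$ (a directed path of positive length from $x$ to $y$ exists), and $x\preceq y$ means $x\prec y$ or $x=y$. For $x\neq s$, $v\neq x$ is an $s$-dominator of $x$ if every directed path from $s$ to $x$ in $D^+$ contains $v$, and $I_s(x)$ is the $s$-dominator of $x$ closest to $x$ (every other $s$-dominator of $x$ is an $s$-dominator of $I_s(x)$). Symmetrically, for $x\neq t$, $v\neq x$ is a $t$-dominator of $x$ if every directed path from $x$ to $t$ in $D^+$ contains $v$, and $I_t(x)$ is the $t$-dominator of $x$ closest to $x$. *)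

theory Defs
  imports Complex_Main
begin

definition walk :: "('a \<times> 'a) set \<Rightarrow> 'a list \<Rightarrow> bool" where
  "walk E xs \<longleftrightarrow> xs \<noteq> [] \<and> (\<forall>i. Suc i < length xs \<longrightarrow> (xs ! i, xs ! Suc i) \<in> E)"

definition walk_len :: "('a \<Rightarrow> 'a \<Rightarrow> real) \<Rightarrow> 'a list \<Rightarrow> real" where
  "walk_len w xs = (\<Sum>i<length xs - 1. w (xs ! i) (xs ! Suc i))"

definition connected_graph :: "'a set \<Rightarrow> ('a \<times> 'a) set \<Rightarrow> bool" where
  "connected_graph V E \<longleftrightarrow>
     (\<forall>u\<in>V. \<forall>v\<in>V. \<exists>xs. walk E xs \<and> hd xs = u \<and> last xs = v)"

definition wgraph :: "'a set \<Rightarrow> ('a \<times> 'a) set \<Rightarrow> ('a \<Rightarrow> 'a \<Rightarrow> real) \<Rightarrow> bool" where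
  "wgraph V E w \<longleftrightarrow> finite V \<and> E \<subseteq> V \<times> V \<and> sym E \<and> irrefl E
     \<and> (\<forall>u v. (u, v) \<in> E \<longrightarrow> w u v > 0 \<and> w u v = w v u)
     \<and> connected_graph V E"

definition gdist :: "('a \<times> 'a) set \<Rightarrow> ('a \<Rightarrow> 'a \<Rightarrow> real) \<Rightarrow> 'a \<Rightarrow> 'a \<Rightarrow> real" where
  "gdist E w u v = Inf {walk_len w xs | xs. walk E xs \<and> hd xs = u \<and> last xs = v}"

text \<open>Shortest s-t paths (with positive lengths, shortest walks are paths).\<close>
definition shortest_path :: "('a \<times> 'a) set \<Rightarrow> ('a \<Rightarrow> 'a \<Rightarrow> real) \<Rightarrow> 'a \<Rightarrow> 'a \<Rightarrow> 'a list \<Rightarrow> bool" where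
  "shortest_path E w s t xs \<longleftrightarrow> walk E xs \<and> hd xs = s \<and> last xs = t
     \<and> walk_len w xs = gdist E w s t"

definition DV :: "('a \<times> 'a) set \<Rightarrow> ('a \<Rightarrow> 'a \<Rightarrow> real) \<Rightarrow> 'a \<Rightarrow> 'a \<Rightarrow> 'a set" where
  "DV E w s t = {v. \<exists>xs. shortest_path E w s t xs \<and> v \<in> set xs}"

definition DA :: "('a \<times> 'a) set \<Rightarrow> ('a \<Rightarrow> 'a \<Rightarrow> real) \<Rightarrow> 'a \<Rightarrow> 'a \<Rightarrow> ('a \<times> 'a) set" where
  "DA E w s t = {(xs ! i, xs ! Suc i) | xs i. shortest_path E w s t xs \<and> Suc i < length xs}"

definition prec :: "('a \<times> 'a) set \<Rightarrow> ('a \<Rightarrow> 'a \<Rightarrow> real) \<Rightarrow> 'a \<Rightarrow> 'a \<Rightarrow> 'a \<Rightarrow> 'a \<Rightarrow> bool" where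
  "prec E w s t x y \<longleftrightarrow> (x, y) \<in> (DA E w s t)\<^sup>+"

definition dpath :: "('a \<times> 'a) set \<Rightarrow> ('a \<Rightarrow> 'a \<Rightarrow> real) \<Rightarrow> 'a \<Rightarrow> 'a \<Rightarrow> 'a \<Rightarrow> 'a \<Rightarrow> 'a list \<Rightarrow> bool" where
  "dpath E w s t a b xs \<longleftrightarrow> walk (DA E w s t) xs \<and> hd xs = a \<and> last xs = b"

definition s_dom :: "('a \<times> 'a) set \<Rightarrow> ('a \<Rightarrow> 'a \<Rightarrow> real) \<Rightarrow> 'a \<Rightarrow> 'a \<Rightarrow> 'a \<Rightarrow> 'a \<Rightarrow> bool" where
  "s_dom E w s t v x \<longleftrightarrow> v \<noteq> x \<and> (\<forall>xs. dpath E w s t s x xs \<longrightarrow> v \<in> set xs)"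

definition t_dom :: "('a \<times> 'a) set \<Rightarrow> ('a \<Rightarrow> 'a \<Rightarrow> real) \<Rightarrow> 'a \<Rightarrow> 'a \<Rightarrow> 'a \<Rightarrow> 'a \<Rightarrow> bool" where
  "t_dom E w s t v x \<longleftrightarrow> v \<noteq> x \<and> (\<forall>xs. dpath E w s t x t xs \<longrightarrow> v \<in> set xs)"

definition I_s :: "('a \<times> 'a) set \<Rightarrow> ('a \<Rightarrow> 'a \<Rightarrow> real) \<Rightarrow> 'a \<Rightarrow> 'a \<Rightarrow> 'a \<Rightarrow> 'a" where
  "I_s E w s t x = (THE v. s_dom E w s t v x \<and>
      (\<forall>u. s_dom E w s t u x \<and> u \<noteq> v \<longrightarrow> s_dom E w s t u v))"

definition I_t :: "('a \<times> 'a) set \<Rightarrow> ('a \<Rightarrow> 'a \<Rightarrow> real) \<Rightarrow> 'a \<Rightarrow> 'a \<Rightarrow> 'a \<Rightarrow> 'a" where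
  "I_t E w s t x = (THE v. t_dom E w s t v x \<and>
      (\<forall>u. t_dom E w s t u x \<and> u \<noteq> v \<longrightarrow> t_dom E w s t u v))"

end

theory Submission
  imports Defs
begin

text \<open>Every prefix of a shortest \<open>s\<close>-\<open>t\<close> path is a shortest path, so \<open>d\<^sub>s\<close> strictly increases
  along the arcs of \<open>D\<^sup>+\<close>; in particular \<open>D\<^sup>+\<close> is acyclic, and there the immediate dominator
  of \<open>x\<close> really is a dominator of \<open>x\<close>. If \<open>y \<prec> x\<close>, then \<open>I\<^sub>s(x)\<close> lies on a walk
  \<open>s \<leadsto> y \<leadsto> x\<close>; it cannot lie on the part after \<open>y\<close> when \<open>d\<^sub>s(I\<^sub>s(x)) < d\<^sub>s(y)\<close>, so
  \<open>I\<^sub>s(x) \<prec> y\<close>. The claim for \<open>I\<^sub>t\<close> is the same argument in the reversed digraph with the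
  potential \<open>-d\<^sub>s\<close>.\<close>

lemma walk_Nil [simp]: "\<not> walk A []"
  by (simp add: walk_def)

lemma walk_singleton [simp]: "walk A [a]"
  by (simp add: walk_def)

lemma walk_not_Nil: "walk A xs \<Longrightarrow> xs \<noteq> []"
  by (simp add: walk_def)

lemma walk_Cons_Cons [simp]: "walk A (a # b # xs) \<longleftrightarrow> (a, b) \<in> A \<and> walk A (b # xs)"
  unfolding walk_def by (auto simp: nth_Cons split: nat.splits)

lemma walk_append:
  assumes "xs \<noteq> []" "ys \<noteq> []"
  shows "walk A (xs @ ys) \<longleftrightarrow> walk A xs \<and> walk A ys \<and> (last xs, hd ys) \<in> A"
  using assms
proof (induction xs rule: induct_list012)
  case (3 a b xs)
  then show ?case by simp
qed (auto simp: neq_Nil_conv)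

lemma walk_glue:
  assumes "walk A xs" "walk A ys" "last xs = hd ys"
  shows "walk A (xs @ tl ys)"
proof (cases "tl ys")
  case (Cons b zs)
  then have "ys = hd ys # b # zs" using assms(2) by (cases ys) auto
  with assms(2) have "(hd ys, b) \<in> A" "walk A (b # zs)" by (metis walk_Cons_Cons)+
  with assms(1,3) Cons show ?thesis by (simp add: walk_append walk_not_Nil)
qed (use assms(1) in simp)

lemma last_append_tl:
  "xs \<noteq> [] \<Longrightarrow> ys \<noteq> [] \<Longrightarrow> last xs = hd ys \<Longrightarrow> last (xs @ tl ys) = last ys"
  by (cases ys) auto

lemma last_take_nth: "j < length xs \<Longrightarrow> last (take (Suc j) xs) = xs ! j"
  by (simp add: take_Suc_conv_app_nth)

lemma walk_take: "walk A xs \<Longrightarrow> 0 < n \<Longrightarrow> walk A (take n xs)"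
  unfolding walk_def by auto

lemma walk_drop: "walk A xs \<Longrightarrow> n < length xs \<Longrightarrow> walk A (drop n xs)"
  unfolding walk_def by auto

lemma walk_converse_rev: "walk (A\<inverse>) (rev xs) \<longleftrightarrow> walk A xs"
proof (induction xs rule: induct_list012)
  case (3 a b xs)
  then show ?case
    using walk_append[of "rev xs @ [b]" "[a]" "A\<inverse>"] by auto
qed simp_all

lemma rtrancl_imp_walk:
  assumes "(a, b) \<in> A\<^sup>*"
  obtains xs where "walk A xs" "hd xs = a" "last xs = b"
  using assms
proof (induction arbitrary: thesis rule: rtrancl_induct)
  case base
  then show ?case by (metis walk_singleton last.simps list.sel(1))
next
  case (step y z)
  then obtain xs where "walk A xs" "hd xs = a" "last xs = y" by blast
  moreover have "walk A [y, z]" using step by simp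
  ultimately show ?case
    using step walk_glue[of A xs "[y, z]"] by (intro step.prems[of "xs @ [z]"]) (auto simp: walk_not_Nil)
qed

lemma walk_nth_rtrancl:
  assumes "walk A xs" "i \<le> j" "j < length xs"
  shows "(xs ! i, xs ! j) \<in> A\<^sup>*"
  using assms(2,3)
proof (induction j rule: dec_induct)
  case (step j)
  then have "(xs ! j, xs ! Suc j) \<in> A" using assms(1) unfolding walk_def by blast
  with step show ?case by (meson Suc_lessD rtrancl_into_rtrancl)
qed simp

lemma walk_nth_trancl:
  assumes "walk A xs" "i < j" "j < length xs"
  shows "(xs ! i, xs ! j) \<in> A\<^sup>+"
proof -
  have "(xs ! i, xs ! Suc i) \<in> A" using assms unfolding walk_def by auto
  moreover have "(xs ! Suc i, xs ! j) \<in> A\<^sup>*" using walk_nth_rtrancl[of A xs "Suc i" j] assms by simp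
  ultimately show ?thesis by (rule rtrancl_into_trancl2)
qed

lemma walk_mem_rtrancl:
  assumes "walk A xs" "v \<in> set xs"
  shows "(hd xs, v) \<in> A\<^sup>*" "(v, last xs) \<in> A\<^sup>*"
proof -
  obtain i where i: "i < length xs" "xs ! i = v" using assms(2) by (meson in_set_conv_nth)
  have "xs \<noteq> []" using assms(2) by auto
  with i walk_nth_rtrancl[OF assms(1)] show "(hd xs, v) \<in> A\<^sup>*" "(v, last xs) \<in> A\<^sup>*"
    by (auto simp: hd_conv_nth last_conv_nth)
qed

lemma acyclic_walk_distinct:
  assumes "acyclic A" "walk A xs"
  shows "distinct xs"
proof -
  have "xs ! i \<noteq> xs ! j" if "i < j" "j < length xs" for i j
    using walk_nth_trancl[OF assms(2) that] assms(1) by (auto simp: acyclic_def)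
  then show ?thesis by (metis distinct_conv_nth linorder_neqE_nat)
qed

lemma potential_less_trancl:
  fixes f :: "'a \<Rightarrow> 'b::order"
  assumes "\<And>a b. (a, b) \<in> A \<Longrightarrow> f a < f b" "(a, b) \<in> A\<^sup>+"
  shows "f a < f b"
  using assms(2) by (induction rule: trancl_induct) (auto dest: assms(1) intro: less_trans)

lemma potential_le_rtrancl:
  fixes f :: "'a \<Rightarrow> 'b::order"
  assumes "\<And>a b. (a, b) \<in> A \<Longrightarrow> f a < f b" "(a, b) \<in> A\<^sup>*"
  shows "f a \<le> f b"
  using assms(2) potential_less_trancl[of A f a b] assms(1)
  by (auto simp: rtrancl_eq_or_trancl)

lemma potential_acyclic:
  fixes f :: "'a \<Rightarrow> 'b::order"
  assumes "\<And>a b. (a, b) \<in> A \<Longrightarrow> f a < f b"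
  shows "acyclic A"
  using potential_less_trancl[of A f] assms unfolding acyclic_def by blast

definition dominates :: "('a \<times> 'a) set \<Rightarrow> 'a \<Rightarrow> 'a \<Rightarrow> 'a \<Rightarrow> bool" where
  "dominates A r v x \<longleftrightarrow> v \<noteq> x \<and> (\<forall>xs. walk A xs \<and> hd xs = r \<and> last xs = x \<longrightarrow> v \<in> set xs)"

definition idom :: "('a \<times> 'a) set \<Rightarrow> 'a \<Rightarrow> 'a \<Rightarrow> 'a" where
  "idom A r x = (THE v. dominates A r v x \<and> (\<forall>u. dominates A r u x \<and> u \<noteq> v \<longrightarrow> dominates A r u v))"

lemma dominates_imp_trancl:
  assumes "(r, x) \<in> A\<^sup>*" "dominates A r v x"
  shows "(r, v) \<in> A\<^sup>*" "(v, x) \<in> A\<^sup>+"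
proof -
  obtain xs where xs: "walk A xs" "hd xs = r" "last xs = x" using assms(1) by (rule rtrancl_imp_walk)
  with assms(2) have "v \<in> set xs" "v \<noteq> x" unfolding dominates_def by auto
  with xs walk_mem_rtrancl show "(r, v) \<in> A\<^sup>*" "(v, x) \<in> A\<^sup>+"
    by (metis rtranclD)+
qed

lemma dominates_asym:
  assumes "acyclic A" "(r, x) \<in> A\<^sup>*" "dominates A r v x"
  shows "\<not> dominates A r x v"
  using dominates_imp_trancl[OF assms(2,3)] dominates_imp_trancl[of r v A x] assms(1)
  by (meson acyclic_def trancl_trans)

text \<open>The immediate dominator of \<open>x\<close> is the last dominator of \<open>x\<close> on any walk from
  \<open>r\<close> to \<open>x\<close>: a walk from \<open>r\<close> to it avoiding an earlier dominator could be continued along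
  the rest of the walk, which in an acyclic graph does not revisit that dominator.\<close>

lemma idom_dominates:
  assumes "acyclic A" "(r, x) \<in> A\<^sup>+"
  shows "dominates A r (idom A r x) x"
proof -
  obtain P where P: "walk A P" "hd P = r" "last P = x"
    using assms(2) by (meson rtrancl_imp_walk trancl_into_rtrancl)
  have "P \<noteq> []" using P(1) by (rule walk_not_Nil)
  have "distinct P" using assms(1) P(1) by (rule acyclic_walk_distinct)
  have "r \<noteq> x" using assms by (auto simp: acyclic_def)
  define J where "J = {j. j < length P \<and> dominates A r (P ! j) x}"
  have "r \<in> set xs" if "walk A xs" "hd xs = r" for xs
    using that by (metis hd_in_set walk_not_Nil)
  then have "0 \<in> J"
    using \<open>P \<noteq> []\<close> P(2) \<open>r \<noteq> x\<close> by (auto simp: J_def dominates_def hd_conv_nth[symmetric])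
  moreover have "finite J" by (simp add: J_def)
  ultimately have "Max J \<in> J" using Max_in by blast
  define k where "k = Max J"
  then have k: "k < length P" "dominates A r (P ! k) x" using \<open>Max J \<in> J\<close> by (auto simp: J_def)
  have "Suc k < length P"
    using k P(3) \<open>P \<noteq> []\<close> by (metis Suc_lessI dominates_def diff_Suc_1 last_conv_nth)
  have earlier: "dominates A r u (P ! k)" if u: "dominates A r u x" "u \<noteq> P ! k" for u
  proof -
    have "u \<in> set P" using u(1) P unfolding dominates_def by blast
    then obtain j where j: "j < length P" "P ! j = u" by (meson in_set_conv_nth)
    then have "j \<le> k" using u \<open>finite J\<close> by (auto simp: k_def J_def)
    then have "u \<in> set (take (Suc k) P)" using j by (auto simp: in_set_conv_nth)
    then have u_late: "u \<notin> set (drop (Suc k) P)"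
      using \<open>distinct P\<close> by (metis append_take_drop_id disjoint_iff distinct_append)
    have "u \<in> set Q" if Q: "walk A Q" "hd Q = r" "last Q = P ! k" for Q
    proof -
      let ?S = "drop k P"
      have S: "walk A ?S" "hd ?S = P ! k" "last ?S = x" "tl ?S = drop (Suc k) P"
        using walk_drop[OF P(1)] k P(3) by (auto simp: hd_drop_conv_nth drop_Suc tl_drop)
      then have "walk A (Q @ drop (Suc k) P)" "last (Q @ drop (Suc k) P) = x"
        using walk_glue[OF Q(1), of ?S] last_append_tl[of Q ?S] Q(3) walk_not_Nil[OF Q(1)]
          walk_not_Nil[OF S(1)] by auto
      moreover have "hd (Q @ drop (Suc k) P) = r" using Q(2) walk_not_Nil[OF Q(1)] by simp
      ultimately have "u \<in> set (Q @ drop (Suc k) P)" using u(1) unfolding dominates_def by blast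
      with u_late show ?thesis by simp
    qed
    with u(2) show ?thesis unfolding dominates_def by (intro conjI allI impI) auto
  qed
  have "idom A r x = P ! k"
    unfolding idom_def
  proof (rule the_equality)
    fix v
    assume v: "dominates A r v x \<and> (\<forall>u. dominates A r u x \<and> u \<noteq> v \<longrightarrow> dominates A r u v)"
    show "v = P ! k"
    proof (rule ccontr)
      assume "v \<noteq> P ! k"
      then have "dominates A r (P ! k) v" "dominates A r v (P ! k)"
        using v k(2) earlier[of v] by blast+
      moreover have "(r, P ! k) \<in> A\<^sup>*"
        using dominates_imp_trancl(1) k(2) assms(2) by (meson trancl_into_rtrancl)
      ultimately show False using dominates_asym[OF assms(1)] by blast
    qed
  qed (use k(2) earlier in blast)
  with k show ?thesis by simp
qed

lemma idom_trancl_before: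
  fixes f :: "'a \<Rightarrow> 'b::linorder"
  assumes pot: "\<And>a b. (a, b) \<in> A \<Longrightarrow> f a < f b"
    and "(r, y) \<in> A\<^sup>*" "(y, x) \<in> A\<^sup>+" and less: "f (idom A r x) < f y"
  shows "(idom A r x, y) \<in> A\<^sup>+"
proof -
  let ?v = "idom A r x"
  have "dominates A r ?v x"
    using potential_acyclic[OF pot] assms(2,3) by (intro idom_dominates) auto
  obtain R1 where R1: "walk A R1" "hd R1 = r" "last R1 = y" using assms(2) by (rule rtrancl_imp_walk)
  obtain R2 where R2: "walk A R2" "hd R2 = y" "last R2 = x"
    using assms(3) by (meson rtrancl_imp_walk trancl_into_rtrancl)
  have "walk A (R1 @ tl R2)" using R1 R2 by (intro walk_glue) simp_all
  moreover have "hd (R1 @ tl R2) = r" "last (R1 @ tl R2) = x"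
    using R1 R2 walk_not_Nil[OF R1(1)] walk_not_Nil[OF R2(1)] by (auto simp: last_append_tl)
  ultimately have "?v \<in> set (R1 @ tl R2)"
    using \<open>dominates A r ?v x\<close> unfolding dominates_def by blast
  then have "?v \<in> set R1 \<or> ?v \<in> set R2" by (cases R2) auto
  moreover have "?v \<notin> set R2"
    using walk_mem_rtrancl(1)[OF R2(1)] potential_le_rtrancl[OF pot] R2(2) less by force
  ultimately have "(?v, y) \<in> A\<^sup>*" using walk_mem_rtrancl(2)[OF R1(1)] R1(3) by auto
  with less show ?thesis by (auto simp: rtrancl_eq_or_trancl)
qed

lemma walk_len_Nil [simp]: "walk_len w [] = 0"
  by (simp add: walk_len_def)

lemma walk_len_singleton [simp]: "walk_len w [a] = 0"
  by (simp add: walk_len_def)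

lemma walk_len_Cons_Cons [simp]: "walk_len w (a # b # xs) = w a b + walk_len w (b # xs)"
  unfolding walk_len_def by (simp add: sum.lessThan_Suc_shift del: sum.lessThan_Suc)

lemma walk_len_glue:
  assumes "xs \<noteq> []" "last xs = hd ys"
  shows "walk_len w (xs @ tl ys) = walk_len w xs + walk_len w ys"
  using assms
proof (induction xs rule: induct_list012)
  case (2 a)
  then show ?case by (cases ys) auto
next
  case (3 a b xs)
  then show ?case by simp
qed simp

lemma walk_len_nonneg:
  assumes "wgraph V E w" "walk E xs"
  shows "0 \<le> walk_len w xs"
  unfolding walk_len_def
proof (rule sum_nonneg)
  fix i assume "i \<in> {..<length xs - 1}"
  then have "(xs ! i, xs ! Suc i) \<in> E" using assms(2) unfolding walk_def by auto
  with assms(1) show "0 \<le> w (xs ! i) (xs ! Suc i)" unfolding wgraph_def by (meson less_imp_le)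
qed

lemma gdist_le_walk_len:
  assumes "wgraph V E w" "walk E xs"
  shows "gdist E w (hd xs) (last xs) \<le> walk_len w xs"
  unfolding gdist_def
proof (rule cInf_lower)
  show "bdd_below {walk_len w ys |ys. walk E ys \<and> hd ys = hd xs \<and> last ys = last xs}"
    using walk_len_nonneg[OF assms(1)] by (intro bdd_belowI[of _ 0]) blast
qed (use assms(2) in blast)

lemma gdist_greatest:
  assumes "walk E xs" "hd xs = u" "last xs = v"
    and "\<And>ys. walk E ys \<Longrightarrow> hd ys = u \<Longrightarrow> last ys = v \<Longrightarrow> c \<le> walk_len w ys"
  shows "c \<le> gdist E w u v"
  unfolding gdist_def using assms by (intro cInf_greatest) blast+

lemma shortest_path_prefix_gdist:
  assumes g: "wgraph V E w" and sp: "shortest_path E w s t xs" and j: "j < length xs"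
  shows "gdist E w s (xs ! j) = walk_len w (take (Suc j) xs)"
proof -
  let ?pre = "take (Suc j) xs" and ?suf = "drop j xs"
  have xs: "walk E xs" "hd xs = s" "last xs = t" "walk_len w xs = gdist E w s t"
    using sp unfolding shortest_path_def by auto
  have pre: "walk E ?pre" "hd ?pre = s" "last ?pre = xs ! j" "?pre \<noteq> []"
    using walk_take[OF xs(1)] xs(2) j by (auto simp: hd_take last_take_nth)
  have suf: "walk E ?suf" "hd ?suf = xs ! j" "last ?suf = t" "tl ?suf = drop (Suc j) xs"
    using walk_drop[OF xs(1) j] j xs(3) by (auto simp: hd_drop_conv_nth drop_Suc tl_drop)
  have split: "walk_len w xs = walk_len w ?pre + walk_len w ?suf"
    using walk_len_glue[of ?pre ?suf w] pre suf by simp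
  have "walk_len w ?pre \<le> walk_len w q" if q: "walk E q" "hd q = s" "last q = xs ! j" for q
  proof -
    have "walk E (q @ tl ?suf)" using walk_glue[OF q(1) suf(1)] q(3) suf(2) by simp
    moreover have "last (q @ tl ?suf) = t"
      using last_append_tl[OF walk_not_Nil[OF q(1)] walk_not_Nil[OF suf(1)]] q(3) suf(2,3) by simp
    moreover have "hd (q @ tl ?suf) = s" using q(2) walk_not_Nil[OF q(1)] by simp
    ultimately have "gdist E w s t \<le> walk_len w (q @ tl ?suf)"
      using gdist_le_walk_len[OF g] by metis
    with split xs(4) walk_len_glue[of q ?suf w] q walk_not_Nil[OF q(1)] suf(2) show ?thesis
      by simp
  qed
  then have "walk_len w ?pre \<le> gdist E w s (xs ! j)"
    using pre by (intro gdist_greatest[of E ?pre]) auto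
  moreover have "gdist E w s (xs ! j) \<le> walk_len w ?pre"
    using gdist_le_walk_len[OF g pre(1)] pre by simp
  ultimately show ?thesis by simp
qed

lemma DA_gdist_less:
  assumes g: "wgraph V E w" and "(a, b) \<in> DA E w s t"
  shows "gdist E w s a < gdist E w s b"
proof -
  obtain xs i where xs: "shortest_path E w s t xs" "Suc i < length xs" "a = xs ! i" "b = xs ! Suc i"
    using assms(2) unfolding DA_def by blast
  have "(a, b) \<in> E" using xs unfolding shortest_path_def walk_def by blast
  with g have "0 < w a b" unfolding wgraph_def by blast
  have "take (Suc (Suc i)) xs = take (Suc i) xs @ tl [a, b]"
    using xs(2-4) by (simp add: take_Suc_conv_app_nth)
  moreover have "last (take (Suc i) xs) = a" "take (Suc i) xs \<noteq> []"
    using xs(2,3) by (auto simp: last_take_nth)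
  ultimately have "walk_len w (take (Suc (Suc i)) xs) = walk_len w (take (Suc i) xs) + w a b"
    using walk_len_glue[of "take (Suc i) xs" "[a, b]" w] by simp
  with \<open>0 < w a b\<close> xs show ?thesis
    using shortest_path_prefix_gdist[OF g xs(1)] by simp
qed

lemma DV_rtrancl_DA:
  assumes "x \<in> DV E w s t"
  shows "(s, x) \<in> (DA E w s t)\<^sup>*" "(x, t) \<in> (DA E w s t)\<^sup>*"
proof -
  obtain xs where xs: "shortest_path E w s t xs" "x \<in> set xs" using assms unfolding DV_def by blast
  then have "walk (DA E w s t) xs" "hd xs = s" "last xs = t"
    unfolding walk_def DA_def shortest_path_def by blast+
  with xs(2) walk_mem_rtrancl show "(s, x) \<in> (DA E w s t)\<^sup>*" "(x, t) \<in> (DA E w s t)\<^sup>*"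
    by metis+
qed

lemma I_s_eq_idom: "I_s E w s t = idom (DA E w s t) s"
  by (simp add: I_s_def idom_def s_dom_def dominates_def dpath_def fun_eq_iff)

lemma t_dom_eq_dominates_converse: "t_dom E w s t v x \<longleftrightarrow> dominates ((DA E w s t)\<inverse>) t v x"
proof -
  have "walk (A\<inverse>) ys \<and> hd ys = t \<and> last ys = x \<longleftrightarrow> walk A (rev ys) \<and> hd (rev ys) = x \<and> last (rev ys) = t"
    for A ys
    using walk_converse_rev[of A "rev ys"] walk_not_Nil[of "A\<inverse>" ys]
    by (auto simp: hd_rev last_rev)
  then show ?thesis
    unfolding t_dom_def dominates_def dpath_def by (metis rev_rev_ident set_rev)
qed

lemma I_t_eq_idom: "I_t E w s t = idom ((DA E w s t)\<inverse>) t"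
  by (simp add: I_t_def idom_def t_dom_eq_dominates_converse fun_eq_iff)

theorem corollary1:
  fixes V :: "'a set" and E :: "('a \<times> 'a) set" and w :: "'a \<Rightarrow> 'a \<Rightarrow> real"
    and s t x y :: 'a
  assumes "wgraph V E w" and "s \<in> V" and "t \<in> V"
    and "x \<in> DV E w s t" and "y \<in> DV E w s t"
    and "prec E w s t y x"
  shows "(gdist E w s (I_s E w s t x) < gdist E w s y \<longrightarrow> prec E w s t (I_s E w s t x) y)
       \<and> (gdist E w s (I_t E w s t y) > gdist E w s x \<longrightarrow> prec E w s t x (I_t E w s t y))"
proof -
  let ?A = "DA E w s t" and ?d = "gdist E w s"
  have pot: "\<And>a b. (a, b) \<in> ?A \<Longrightarrow> ?d a < ?d b"
    using DA_gdist_less[OF assms(1)] by blast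
  have pot_converse: "\<And>a b. (a, b) \<in> ?A\<inverse> \<Longrightarrow> - ?d a < - ?d b"
    using pot by simp
  have yx: "(y, x) \<in> ?A\<^sup>+" using assms(6) unfolding prec_def .
  have sy: "(s, y) \<in> ?A\<^sup>*" using DV_rtrancl_DA(1)[OF assms(5)] .
  have xt: "(x, t) \<in> ?A\<^sup>*" using DV_rtrancl_DA(2)[OF assms(4)] .
  show ?thesis
  proof (intro conjI impI)
    assume "?d (I_s E w s t x) < ?d y"
    then show "prec E w s t (I_s E w s t x) y"
      using idom_trancl_before[where f = ?d, OF pot sy yx] unfolding prec_def I_s_eq_idom by blast
  next
    assume "?d (I_t E w s t y) > ?d x"
    moreover have "(t, x) \<in> (?A\<inverse>)\<^sup>*" "(x, y) \<in> (?A\<inverse>)\<^sup>+"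
      using xt yx by (simp_all add: rtrancl_converse trancl_converse)
    ultimately have "(I_t E w s t y, x) \<in> (?A\<inverse>)\<^sup>+"
      using idom_trancl_before[where A = "?A\<inverse>" and f = "\<lambda>a. - ?d a", OF pot_converse]
      unfolding I_t_eq_idom by simp
    then show "prec E w s t x (I_t E w s t y)"
      unfolding prec_def by (simp add: trancl_converse)
  qed
qed

end
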